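(* Let $A$ be an abelian group and $B$ a subgroup of $A$ such that $A/B$ is finite and $l$-torsion. Let $R = \mathbb{Z}[1/l]$ and let $M$ be an $RA$-module. Then for every $n \ge 0$ the natural maps \[ H_n(A, M_B) \to H_n(A, M_A), \qquad H^n(A, M^A) \to H^n(A, M^B) \] are isomorphisms.
   Context: For a group $G$ and a $G$-module $M$, $M_G := M/\langle m - gm \mid g \in G, m \in M\rangle$ (coinvariants) and $M^G := \{m \in M \mid gm = m \ \forall g\in G\}$ (invariants). Since $A$ is abelian, $M_B$ and $M^B$ are $A$-modules, and the maps above are induced by the natural $A$-module maps $M_B \to M_A$ and $M^A \to M^B$. Here $l$ is a positive integer and an abelian group is $l$-torsion if every element is annihilated by $l$. *)

theory Defs
  imports Main "HOL-Library.Function_Algebras"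
begin

text \<open>Group (co)homology is computed via the standard (inhomogeneous) bar complex:
n-chains are finitely supported functions from lists of length n (elements of A^n) to M;
n-cochains are functions from lists of length n to M.\<close>

definition sgn_pow :: "nat \<Rightarrow> 'm::ab_group_add \<Rightarrow> 'm" where
  "sgn_pow i m = (if even i then m else - m)"

definition single :: "'k \<Rightarrow> 'm::zero \<Rightarrow> 'k \<Rightarrow> 'm" where
  "single x m = (\<lambda>y. if y = x then m else 0)"

text \<open>merge i [g1,...,gk] = [g1,...,g_(i-1), g_i + g_(i+1), g_(i+2),...,gk]\<close>
definition merge :: "nat \<Rightarrow> 'a::plus list \<Rightarrow> 'a list" where
  "merge i x = take (i - 1) x @ [x ! (i - 1) + x ! i] @ drop (i + 1) x"

definition add_subgroup :: "'m::ab_group_add set \<Rightarrow> bool" where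
  "add_subgroup S \<longleftrightarrow> 0 \<in> S \<and> (\<forall>x\<in>S. \<forall>y\<in>S. x - y \<in> S)"

text \<open>Submodule generated by m - g m (g in G); M_G = M / coinv_sub act G\<close>
definition coinv_sub :: "('a \<Rightarrow> 'm \<Rightarrow> 'm) \<Rightarrow> 'a set \<Rightarrow> 'm::ab_group_add set" where
  "coinv_sub act G = \<Inter> {S. add_subgroup S \<and> {m - act g m | m g. g \<in> G} \<subseteq> S}"

definition invariants :: "('a \<Rightarrow> 'm \<Rightarrow> 'm) \<Rightarrow> 'a set \<Rightarrow> 'm set" where
  "invariants act G = {m. \<forall>g\<in>G. act g m = m}"

definition chains :: "nat \<Rightarrow> 'm::zero set \<Rightarrow> ('a list \<Rightarrow> 'm) set" where
  "chains n S = {c. finite {x. c x \<noteq> 0} \<and> (\<forall>x. c x \<noteq> 0 \<longrightarrow> length x = n) \<and> (\<forall>x. c x \<in> S)}"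

definition bdgen :: "('a::ab_group_add \<Rightarrow> 'm::ab_group_add \<Rightarrow> 'm) \<Rightarrow> 'a list \<Rightarrow> 'm \<Rightarrow> 'a list \<Rightarrow> 'm" where
  "bdgen act x m = (if x = [] then 0 else
     single (tl x) (act (- hd x) m)
     + (\<Sum>i\<in>{1..<length x}. single (merge i x) (sgn_pow i m))
     + single (butlast x) (sgn_pow (length x) m))"

definition bd :: "('a::ab_group_add \<Rightarrow> 'm::ab_group_add \<Rightarrow> 'm) \<Rightarrow> ('a list \<Rightarrow> 'm) \<Rightarrow> 'a list \<Rightarrow> 'm" where
  "bd act c = (\<Sum>x\<in>{x. c x \<noteq> 0}. bdgen act x (c x))"

text \<open>cycles of C_n(A, M/S), represented by chains with values in M\<close>
definition hcycles :: "('a::ab_group_add \<Rightarrow> 'm::ab_group_add \<Rightarrow> 'm) \<Rightarrow> nat \<Rightarrow> 'm set \<Rightarrow> ('a list \<Rightarrow> 'm) set" where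
  "hcycles act n S = {c \<in> chains n UNIV. bd act c \<in> chains (n - 1) S}"

definition hrel :: "('a::ab_group_add \<Rightarrow> 'm::ab_group_add \<Rightarrow> 'm) \<Rightarrow> nat \<Rightarrow> 'm set \<Rightarrow> (('a list \<Rightarrow> 'm) \<times> ('a list \<Rightarrow> 'm)) set" where
  "hrel act n S = {(c, c'). c \<in> hcycles act n S \<and> c' \<in> hcycles act n S \<and>
      (\<exists>s\<in>chains n S. \<exists>d\<in>chains (Suc n) UNIV. c - c' = s + bd act d)}"

definition group_homology :: "('a::ab_group_add \<Rightarrow> 'm::ab_group_add \<Rightarrow> 'm) \<Rightarrow> nat \<Rightarrow> 'm set \<Rightarrow> ('a list \<Rightarrow> 'm) set set" where
  "group_homology act n S = hcycles act n S // hrel act n S"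

text \<open>natural map H_n(A, M/S) \<rightarrow> H_n(A, M/T) for S \<subseteq> T, induced by M/S \<rightarrow> M/T\<close>
definition hmap :: "('a::ab_group_add \<Rightarrow> 'm::ab_group_add \<Rightarrow> 'm) \<Rightarrow> nat \<Rightarrow> 'm set \<Rightarrow> ('a list \<Rightarrow> 'm) set \<Rightarrow> ('a list \<Rightarrow> 'm) set" where
  "hmap act n T X = \<Union> ((\<lambda>c. hrel act n T `` {c}) ` X)"

definition cochains :: "nat \<Rightarrow> 'm::zero set \<Rightarrow> ('a list \<Rightarrow> 'm) set" where
  "cochains n N = {f. (\<forall>x. length x = n \<longrightarrow> f x \<in> N) \<and> (\<forall>x. length x \<noteq> n \<longrightarrow> f x = 0)}"

definition cbd :: "('a::ab_group_add \<Rightarrow> 'm::ab_group_add \<Rightarrow> 'm) \<Rightarrow> nat \<Rightarrow> ('a list \<Rightarrow> 'm) \<Rightarrow> 'a list \<Rightarrow> 'm" where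
  "cbd act n f x = (if length x = Suc n then
      act (hd x) (f (tl x)) + (\<Sum>i\<in>{1..n}. sgn_pow i (f (merge i x)))
      + sgn_pow (Suc n) (f (butlast x))
    else 0)"

definition cocycles :: "('a::ab_group_add \<Rightarrow> 'm::ab_group_add \<Rightarrow> 'm) \<Rightarrow> nat \<Rightarrow> 'm set \<Rightarrow> ('a list \<Rightarrow> 'm) set" where
  "cocycles act n N = {f \<in> cochains n N. cbd act n f = 0}"

definition coboundaries :: "('a::ab_group_add \<Rightarrow> 'm::ab_group_add \<Rightarrow> 'm) \<Rightarrow> nat \<Rightarrow> 'm set \<Rightarrow> ('a list \<Rightarrow> 'm) set" where
  "coboundaries act n N = (case n of 0 \<Rightarrow> {0} | Suc k \<Rightarrow> cbd act k ` cochains k N)"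

definition crel :: "('a::ab_group_add \<Rightarrow> 'm::ab_group_add \<Rightarrow> 'm) \<Rightarrow> nat \<Rightarrow> 'm set \<Rightarrow> (('a list \<Rightarrow> 'm) \<times> ('a list \<Rightarrow> 'm)) set" where
  "crel act n N = {(f, g). f \<in> cocycles act n N \<and> g \<in> cocycles act n N \<and> f - g \<in> coboundaries act n N}"

definition group_cohomology :: "('a::ab_group_add \<Rightarrow> 'm::ab_group_add \<Rightarrow> 'm) \<Rightarrow> nat \<Rightarrow> 'm set \<Rightarrow> ('a list \<Rightarrow> 'm) set set" where
  "group_cohomology act n N = cocycles act n N // crel act n N"

text \<open>natural map H^n(A, N) \<rightarrow> H^n(A, N') for N \<subseteq> N', induced by inclusion\<close>
definition cmap :: "('a::ab_group_add \<Rightarrow> 'm::ab_group_add \<Rightarrow> 'm) \<Rightarrow> nat \<Rightarrow> 'm set \<Rightarrow> ('a list \<Rightarrow> 'm) set \<Rightarrow> ('a list \<Rightarrow> 'm) set" where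
  "cmap act n N' X = \<Union> ((\<lambda>f. crel act n N' `` {f}) ` X)"

end

theory Submission
  imports Defs "HOL.Modules"
begin

text \<open>The natural maps are induced by the inclusions \<open>M\<^sup>A \<subseteq> M\<^sup>B\<close> and
  \<open>ker (M \<rightarrow> M\<^sub>B) \<subseteq> ker (M \<rightarrow> M\<^sub>A)\<close> of coefficients. Let \<open>g\<^sub>1, \<dots>, g\<^sub>k\<close> represent \<open>A/B\<close>, let
  \<open>W\<close> be the family of the \<open>l\<^sup>k\<close> elements \<open>\<Sum>\<^sub>i n\<^sub>i g\<^sub>i\<close> with \<open>0 \<le> n\<^sub>i < l\<close>, and let
  \<open>P = |W|\<^sup>-\<^sup>1 \<Sum>\<^sub>w\<^sub>\<in>\<^sub>W w\<close>, which exists because \<open>l\<close> is invertible on \<open>M\<close>. Inserting \<open>a\<close> in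
  every position of a bar is a homotopy between translation by \<open>a\<close> and the identity, on chains
  and on cochains, so \<open>P\<close> is homotopic to the identity. Since \<open>l g\<^sub>i \<in> B\<close>, translating by \<open>g\<^sub>i\<close>
  permutes the sum over \<open>W\<close> up to translations by elements of \<open>B\<close>; hence \<open>P\<close> maps \<open>M\<^sup>B\<close> into
  \<open>M\<^sup>A\<close> and \<open>ker (M \<rightarrow> M\<^sub>A)\<close> into \<open>ker (M \<rightarrow> M\<^sub>B)\<close>, and it is the identity on \<open>M\<^sup>A\<close>.
  Thus \<open>P\<close> induces inverses of both natural maps.\<close>

section \<open>Combinatorics of the bar complex\<close>

definition ins_at :: "nat \<Rightarrow> 'a \<Rightarrow> 'a list \<Rightarrow> 'a list" where
  "ins_at i a x = take i x @ a # drop i x"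

lemma ins_at_append: "ins_at (length u) a (u @ v) = u @ a # v"
  by (simp add: ins_at_def)

lemma length_ins_at [simp]: "i \<le> length x \<Longrightarrow> length (ins_at i a x) = Suc (length x)"
  by (simp add: ins_at_def)

lemma hd_ins_at_0 [simp]: "hd (ins_at 0 a x) = a"
  and tl_ins_at_0 [simp]: "tl (ins_at 0 a x) = x"
  by (simp_all add: ins_at_def)

lemma hd_ins_at_Suc: "x \<noteq> [] \<Longrightarrow> hd (ins_at (Suc i) a x) = hd x"
  and tl_ins_at_Suc: "x \<noteq> [] \<Longrightarrow> tl (ins_at (Suc i) a x) = ins_at i a (tl x)"
  by (cases x; simp add: ins_at_def)+

lemma butlast_ins_at: "i < length x \<Longrightarrow> butlast (ins_at i a x) = ins_at i a (butlast x)"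
  by (simp add: ins_at_def butlast_append take_butlast butlast_drop)

lemma butlast_ins_at_length: "butlast (ins_at (length x) a x) = x"
  by (simp add: ins_at_def)

lemma length_merge [simp]: "1 \<le> k \<Longrightarrow> k < length x \<Longrightarrow> length (merge k x) = length x - 1"
  by (simp add: merge_def)

lemma merge_append_left: "k < length u \<Longrightarrow> merge k (u @ v) = merge k u @ v"
  unfolding merge_def by (auto simp: nth_append Suc_diff_le)

lemma merge_append_right: "length u < k \<Longrightarrow> merge k (u @ v) = u @ merge (k - length u) v"
  unfolding merge_def by (auto simp: nth_append Suc_diff_le)

lemma merge_append_Cons_Cons: "merge (Suc (length u)) (u @ y # z # v) = u @ (y + z) # v"
  unfolding merge_def by (auto simp: nth_append Suc_diff_le)

lemma merge_ins_at_less: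
  assumes "1 \<le> k" "k < i" "i \<le> length x"
  shows "merge k (ins_at i a x) = ins_at (i - 1) a (merge k x)"
proof -
  define u where "u = take i x"
  define v where "v = drop i x"
  have x: "x = u @ v" and u: "length u = i"
    using assms by (auto simp: u_def v_def)
  have "merge k (ins_at i a x) = merge k u @ a # v"
    using assms x u by (simp add: ins_at_append[of u, simplified u] merge_append_left)
  also have "\<dots> = ins_at (i - 1) a (merge k u @ v)"
    using assms u ins_at_append[of "merge k u" a v] by simp
  also have "merge k u @ v = merge k x"
    using assms x u by (simp add: merge_append_left)
  finally show ?thesis .
qed

lemma merge_ins_at_greater:
  assumes "i + 2 \<le> k" "k \<le> Suc (length x)"
  shows "merge k (ins_at i a x) = ins_at i a (merge (k - 1) x)"
proof -
  define u where "u = take i x"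
  define v where "v = drop i x"
  have x: "x = u @ v" and u: "length u = i"
    using assms by (auto simp: u_def v_def)
  have "merge k (ins_at i a x) = merge k ((u @ [a]) @ v)"
    using x u ins_at_append[of u a v] by simp
  also have "\<dots> = (u @ [a]) @ merge (k - Suc i) v"
    using assms u merge_append_right[of "u @ [a]" k v] by simp
  also have "\<dots> = ins_at i a (u @ merge (k - 1 - i) v)"
    using u ins_at_append[of u a] by simp
  also have "u @ merge (k - 1 - i) v = merge (k - 1) x"
    using assms x u merge_append_right[of u "k - 1" v] by simp
  finally show ?thesis .
qed

lemma merge_ins_at_adjacent:
  fixes a :: "'a::ab_semigroup_add"
  assumes "i < length x"
  shows "merge (Suc i) (ins_at i a x) = merge (Suc i) (ins_at (Suc i) a x)"
proof -
  define u where "u = take i x"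
  define v where "v = drop (Suc i) x"
  have x: "x = u @ x ! i # v" and u: "length u = i"
    using assms by (auto simp: u_def v_def id_take_nth_drop)
  have "ins_at i a x = u @ a # x ! i # v"
    using x u ins_at_append[of u a] by metis
  moreover have "ins_at (Suc i) a x = u @ x ! i # a # v"
    using x u ins_at_append[of "u @ [x ! i]" a v] by simp
  ultimately show ?thesis
    using u merge_append_Cons_Cons[of u] by (simp add: add.commute)
qed

lemma sgn_pow_0 [simp]: "sgn_pow 0 x = x"
  and sgn_pow_Suc: "sgn_pow (Suc i) x = - sgn_pow i x"
  and sgn_pow_Suc_Suc [simp]: "sgn_pow (Suc (Suc i)) x = sgn_pow i x"
  and sgn_pow_add_self: "sgn_pow (i + i) x = x"
  and sgn_pow_sgn_pow: "sgn_pow i (sgn_pow k x) = sgn_pow (i + k) x"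
  by (simp_all add: sgn_pow_def)

lemma additive_sgn_pow: "additive (sgn_pow i)"
  by (rule additive.intro) (simp add: sgn_pow_def)

lemma (in additive) sgn_pow: "f (sgn_pow i x) = sgn_pow i (f x)"
  by (simp add: sgn_pow_def minus)

lemma (in additive) sum_list_map: "f (\<Sum>x\<leftarrow>xs. g x) = (\<Sum>x\<leftarrow>xs. f (g x))"
  by (induction xs) (simp_all add: zero add)

lemmas sgn_pow_zero [simp] = additive.zero[OF additive_sgn_pow]
lemmas sgn_pow_plus = additive.add[OF additive_sgn_pow]
lemmas sgn_pow_sum = additive.sum[OF additive_sgn_pow]

text \<open>The terms of \<open>\<delta> h + h \<delta>\<close> that merge two adjacent entries cancel in pairs: those with
  the merge left of the inserted entry against those with the merge right of it, and the two
  ways of merging the inserted entry with a neighbour against each other.\<close>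

lemma sum_merge_ins_at_cancel:
  fixes f :: "'a::ab_group_add list \<Rightarrow> 'm::ab_group_add"
  assumes len: "length x = Suc p"
  shows "(\<Sum>k\<in>{1..p}. sgn_pow k (\<Sum>i\<le>p. sgn_pow i (f (ins_at i a (merge k x)))))
       + (\<Sum>i\<le>Suc p. sgn_pow i (\<Sum>k\<in>{1..Suc p}. sgn_pow k (f (merge k (ins_at i a x))))) = 0"
proof -
  define F1 where "F1 = (\<lambda>(j, k). sgn_pow (j + k) (f (ins_at j a (merge k x))))"
  define F2 where "F2 = (\<lambda>(i, k). sgn_pow (i + k) (f (merge k (ins_at i a x))))"
  define U where "U = (\<lambda>i. f (merge i (ins_at i a x)))"
  have sum1: "(\<Sum>k\<in>{1..p}. sgn_pow k (\<Sum>i\<le>p. sgn_pow i (f (ins_at i a (merge k x)))))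
      = sum F1 ({..p} \<times> {1..p})"
    unfolding F1_def
    by (simp add: sgn_pow_sum sgn_pow_sgn_pow sum.cartesian_product[symmetric])
       (subst sum.swap, simp add: add.commute)
  have sum2: "(\<Sum>i\<le>Suc p. sgn_pow i (\<Sum>k\<in>{1..Suc p}. sgn_pow k (f (merge k (ins_at i a x)))))
      = sum F2 ({..Suc p} \<times> {1..Suc p})"
    unfolding F2_def by (simp only: sgn_pow_sum sgn_pow_sgn_pow sum.cartesian_product)
  define Ege where "Ege = {(j, k). j \<le> p \<and> 1 \<le> k \<and> k \<le> j}"
  define Elt where "Elt = {(j, k). j \<le> p \<and> k \<le> p \<and> j < (k::nat)}"
  define Dlt where "Dlt = {(i, k). i \<le> Suc p \<and> 1 \<le> k \<and> k < (i::nat)}"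
  define Deq where "Deq = {(i, k). 1 \<le> i \<and> i \<le> Suc p \<and> k = (i::nat)}"
  define Deq1 where "Deq1 = {(i, k). i \<le> p \<and> k = Suc (i::nat)}"
  define Dgt where "Dgt = {(i, k). k \<le> Suc p \<and> i + 2 \<le> (k::nat)}"
  have finE: "finite Ege" "finite Elt"
    by (rule finite_subset[of _ "{..p} \<times> {..p}"], auto simp: Ege_def Elt_def)+
  have finD: "finite Dlt" "finite Deq" "finite Deq1" "finite Dgt"
    by (rule finite_subset[of _ "{..Suc p} \<times> {..Suc p}"],
        auto simp: Dlt_def Deq_def Deq1_def Dgt_def)+
  have split1: "sum F1 ({..p} \<times> {1..p}) = sum F1 Ege + sum F1 Elt"
  proof -
    have "{..p} \<times> {1..p} = Ege \<union> Elt" "Ege \<inter> Elt = {}"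
      by (auto simp: Ege_def Elt_def)
    thus ?thesis using finE by (simp add: sum.union_disjoint)
  qed
  have split2: "sum F2 ({..Suc p} \<times> {1..Suc p}) = sum F2 Dlt + sum F2 Deq + sum F2 Deq1 + sum F2 Dgt"
  proof -
    have "{..Suc p} \<times> {1..Suc p} = Dlt \<union> Deq \<union> Deq1 \<union> Dgt"
      "Dlt \<inter> Deq = {}" "(Dlt \<union> Deq) \<inter> Deq1 = {}" "(Dlt \<union> Deq \<union> Deq1) \<inter> Dgt = {}"
      by (auto simp: Dlt_def Deq_def Deq1_def Dgt_def)
    thus ?thesis using finD by (simp add: sum.union_disjoint)
  qed
  have lt: "sum F2 Dlt = sum (\<lambda>y. - F1 y) Ege"
  proof (rule sum.reindex_bij_witness[where i="\<lambda>(j, k). (Suc j, k)" and j="\<lambda>(i, k). (i - 1, k)"])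
    fix y assume "y \<in> Dlt"
    then obtain i k where y: "y = (i, k)" "i \<le> Suc p" "1 \<le> k" "k < i" by (auto simp: Dlt_def)
    have "F2 (i, k) = sgn_pow (i + k) (f (ins_at (i - 1) a (merge k x)))"
      using y len by (simp add: F2_def merge_ins_at_less)
    also have "\<dots> = - F1 (i - 1, k)"
      using y by (cases i) (auto simp: F1_def sgn_pow_Suc)
    finally show "(\<lambda>y. - F1 y) (case y of (i, k) \<Rightarrow> (i - 1, k)) = F2 y" using y by simp
  qed (auto simp: Dlt_def Ege_def)
  have gt: "sum F2 Dgt = sum (\<lambda>y. - F1 y) Elt"
  proof (rule sum.reindex_bij_witness[where i="\<lambda>(j, k). (j, Suc k)" and j="\<lambda>(i, k). (i, k - 1)"])
    fix y assume "y \<in> Dgt"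
    then obtain i k where y: "y = (i, k)" "k \<le> Suc p" "i + 2 \<le> k" by (auto simp: Dgt_def)
    have "F2 (i, k) = sgn_pow (i + k) (f (ins_at i a (merge (k - 1) x)))"
      using y len by (simp add: F2_def merge_ins_at_greater)
    also have "\<dots> = - F1 (i, k - 1)"
      using y by (cases k) (auto simp: F1_def sgn_pow_Suc)
    finally show "(\<lambda>y. - F1 y) (case y of (i, k) \<Rightarrow> (i, k - 1)) = F2 y" using y by simp
  qed (auto simp: Dgt_def Elt_def)
  have eq: "sum F2 Deq = sum U {1..Suc p}"
    by (rule sum.reindex_bij_witness[where i="\<lambda>i. (i, i)" and j="fst"])
       (auto simp: Deq_def F2_def U_def sgn_pow_add_self)
  have eq1: "sum F2 Deq1 = sum (\<lambda>i. - U (Suc i)) {..p}"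
  proof (rule sum.reindex_bij_witness[where i="\<lambda>i. (i, Suc i)" and j="fst"])
    fix y assume "y \<in> Deq1"
    then obtain i where y: "y = (i, Suc i)" "i \<le> p" by (auto simp: Deq1_def)
    show "- U (Suc (fst y)) = F2 y"
      using y len by (simp add: F2_def U_def sgn_pow_add_self merge_ins_at_adjacent
          sgn_pow_Suc[of "i + i"] del: sgn_pow_Suc_Suc)
  qed (auto simp: Deq1_def)
  have shift: "sum U {1..Suc p} = sum (\<lambda>i. U (Suc i)) {..p}"
    using sum.shift_bounds_cl_Suc_ivl[of U 0 p] by (simp add: atLeast0AtMost)
  show ?thesis
    unfolding sum1 sum2 split1 split2 lt gt eq eq1 shift by (simp add: sum_negf)
qed

section \<open>Cochain homotopy\<close>

definition coch_htpy :: "'a \<Rightarrow> nat \<Rightarrow> ('a list \<Rightarrow> 'm::ab_group_add) \<Rightarrow> 'a list \<Rightarrow> 'm" where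
  "coch_htpy a n f y =
     (if Suc (length y) = n then (\<Sum>i\<le>length y. sgn_pow i (f (ins_at i a y))) else 0)"

locale additive_action =
  fixes act :: "'a::ab_group_add \<Rightarrow> 'm::ab_group_add \<Rightarrow> 'm"
  assumes act_add: "act g (x + y) = act g x + act g y"
begin

lemma additive_act: "additive (act g)"
  by (rule additive.intro) (rule act_add)

lemmas act_zero_right [simp] = additive.zero[OF additive_act]
lemmas act_minus = additive.minus[OF additive_act]
lemmas act_diff = additive.diff[OF additive_act]
lemmas act_sum = additive.sum[OF additive_act]
lemmas act_sgn_pow = additive.sgn_pow[OF additive_act]
lemmas act_sum_list = additive.sum_list_map[OF additive_act]

lemma sum_hd_ins_at:
  assumes len: "length x = Suc p"
  shows "act (hd x) (\<Sum>i\<le>p. sgn_pow i (f (ins_at i a (tl x))))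
     + (\<Sum>i\<le>Suc p. sgn_pow i (act (hd (ins_at i a x)) (f (tl (ins_at i a x))))) = act a (f x)"
proof -
  have ne: "x \<noteq> []" using len by auto
  have "(\<Sum>i\<le>Suc p. sgn_pow i (act (hd (ins_at i a x)) (f (tl (ins_at i a x)))))
     = act a (f x) + (\<Sum>i\<le>p. sgn_pow (Suc i) (act (hd (ins_at (Suc i) a x)) (f (tl (ins_at (Suc i) a x)))))"
    by (subst sum.atMost_Suc_shift) simp
  also have "\<dots> = act a (f x) - (\<Sum>i\<le>p. act (hd x) (sgn_pow i (f (ins_at i a (tl x)))))"
    using ne by (simp add: hd_ins_at_Suc tl_ins_at_Suc sgn_pow_Suc sum_negf act_sgn_pow)
  finally show ?thesis by (simp add: act_sum)
qed

lemma sum_butlast_ins_at: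
  assumes len: "length x = Suc p"
  shows "sgn_pow (Suc p) (\<Sum>i\<le>p. sgn_pow i (f (ins_at i a (butlast x))))
     + (\<Sum>i\<le>Suc p. sgn_pow i (sgn_pow (Suc (Suc p)) (f (butlast (ins_at i a x))))) = - f x"
proof -
  have "(\<Sum>i\<le>p. sgn_pow i (sgn_pow (Suc (Suc p)) (f (butlast (ins_at i a x)))))
     = (\<Sum>i\<le>p. sgn_pow i (sgn_pow (Suc (Suc p)) (f (ins_at i a (butlast x)))))"
    by (rule sum.cong) (auto simp: butlast_ins_at len)
  also have "\<dots> = - sgn_pow (Suc p) (\<Sum>i\<le>p. sgn_pow i (f (ins_at i a (butlast x))))"
    by (simp add: sgn_pow_sum sgn_pow_sgn_pow sum_negf[symmetric] sgn_pow_Suc add.commute)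
  moreover have "butlast (ins_at (Suc p) a x) = x"
    using butlast_ins_at_length[of x a] len by simp
  ultimately show ?thesis
    by (simp add: sgn_pow_def)
qed

lemma cbd_coch_htpy:
  assumes len: "length x = Suc p"
  shows "cbd act p (coch_htpy a (Suc p) f) x + coch_htpy a (Suc (Suc p)) (cbd act (Suc p) f) x
         = act a (f x) - f x"
proof -
  let ?H = "coch_htpy a (Suc p) f"
  have H: "?H y = (\<Sum>i\<le>p. sgn_pow i (f (ins_at i a y)))" if "length y = p" for y
    using that by (simp add: coch_htpy_def)
  have merges: "(\<Sum>k\<in>{1..p}. sgn_pow k (?H (merge k x)))
     = (\<Sum>k\<in>{1..p}. sgn_pow k (\<Sum>i\<le>p. sgn_pow i (f (ins_at i a (merge k x)))))"
    by (rule sum.cong) (use len in \<open>auto simp: H\<close>)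
  have "cbd act p ?H x = act (hd x) (?H (tl x)) + (\<Sum>k\<in>{1..p}. sgn_pow k (?H (merge k x)))
      + sgn_pow (Suc p) (?H (butlast x))"
    using len by (simp add: cbd_def)
  moreover have "coch_htpy a (Suc (Suc p)) (cbd act (Suc p) f) x
     = (\<Sum>i\<le>Suc p. sgn_pow i (act (hd (ins_at i a x)) (f (tl (ins_at i a x)))))
     + (\<Sum>i\<le>Suc p. sgn_pow i (\<Sum>k\<in>{1..Suc p}. sgn_pow k (f (merge k (ins_at i a x)))))
     + (\<Sum>i\<le>Suc p. sgn_pow i (sgn_pow (Suc (Suc p)) (f (butlast (ins_at i a x)))))"
    using len by (simp add: coch_htpy_def cbd_def sgn_pow_plus sum.distrib del: sgn_pow_Suc_Suc)
  ultimately show ?thesis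
    using sum_hd_ins_at[OF len, of f a] sum_merge_ins_at_cancel[OF len, of f a]
      sum_butlast_ins_at[OF len, of f a] len
    by (simp add: H merges algebra_simps del: sgn_pow_Suc_Suc)
qed

end

definition finsupp :: "('k \<Rightarrow> 'm::zero) \<Rightarrow> bool" where
  "finsupp c \<longleftrightarrow> finite {x. c x \<noteq> 0}"

definition lin_ext :: "('k \<Rightarrow> 'm::zero \<Rightarrow> 'n::comm_monoid_add) \<Rightarrow> ('k \<Rightarrow> 'm) \<Rightarrow> 'n" where
  "lin_ext F c = (\<Sum>x\<in>{x. c x \<noteq> 0}. F x (c x))"

lemma fun_sum_apply: "sum F A y = (\<Sum>x\<in>A. F x y)"
  by (induction A rule: infinite_finite_induct) auto

lemma fun_sum_list_apply: "(\<Sum>w\<leftarrow>ws. F w) y = (\<Sum>w\<leftarrow>ws. F w y)"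
  by (induction ws) auto

lemma finsupp_zero [simp]: "finsupp 0"
  by (simp add: finsupp_def)

lemma finsupp_add: "finsupp c \<Longrightarrow> finsupp d \<Longrightarrow> finsupp (c + (d::'k \<Rightarrow> 'm::monoid_add))"
  unfolding finsupp_def
  by (rule finite_subset[of _ "{x. c x \<noteq> 0} \<union> {x. d x \<noteq> 0}"]) auto

lemma finsupp_uminus [simp]: "finsupp (- (c::'k \<Rightarrow> 'm::group_add)) = finsupp c"
  by (simp add: finsupp_def)

lemma finsupp_sum: "(\<And>i. i \<in> I \<Longrightarrow> finsupp (c i)) \<Longrightarrow> finsupp (sum c I :: 'k \<Rightarrow> 'm::comm_monoid_add)"
  by (induction I rule: infinite_finite_induct) (auto intro: finsupp_add)

lemma finsupp_sum_list:
  "(\<And>w. w \<in> set ws \<Longrightarrow> finsupp (F w)) \<Longrightarrow> finsupp (\<Sum>w\<leftarrow>ws. F w :: 'k \<Rightarrow> 'm::monoid_add)"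
  by (induction ws) (auto intro: finsupp_add)

lemma finsupp_single [simp]: "finsupp (single x m)"
  unfolding finsupp_def by (rule finite_subset[of _ "{x}"]) (auto simp: single_def)

lemma finsupp_comp: "\<phi> 0 = 0 \<Longrightarrow> finsupp c \<Longrightarrow> finsupp (\<phi> \<circ> c)"
  unfolding finsupp_def by (rule finite_subset[of _ "{x. c x \<noteq> 0}"]) auto

lemma additive_single: "additive (single x)"
  by (rule additive.intro) (simp add: single_def fun_eq_iff)

lemma sgn_pow_single: "sgn_pow i (single x m) = single x (sgn_pow i m)"
  by (simp add: sgn_pow_def additive.minus[OF additive_single])

lemma lin_ext_superset:
  assumes "finite S" "{x. c x \<noteq> 0} \<subseteq> S" "\<And>x. F x 0 = 0"
  shows "lin_ext F c = (\<Sum>x\<in>S. F x (c x))"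
  unfolding lin_ext_def by (rule sum.mono_neutral_left) (use assms in auto)

lemma lin_ext_zero [simp]: "lin_ext F 0 = 0"
  by (simp add: lin_ext_def)

lemma lin_ext_single: "(\<And>x. F x 0 = 0) \<Longrightarrow> lin_ext F (single x m) = F x m"
  by (subst lin_ext_superset[of "{x}"]) (auto simp: single_def)

lemma lin_ext_add:
  assumes "finsupp c" "finsupp d" "\<And>x. additive (F x)"
  shows "lin_ext F (c + d) = lin_ext F c + lin_ext F d"
proof -
  let ?S = "{x. c x \<noteq> 0} \<union> {x. d x \<noteq> 0}"
  have S: "finite ?S" using assms by (simp add: finsupp_def)
  have F0: "\<And>x. F x 0 = 0" using assms(3) additive.zero by blast
  have "lin_ext F (c + d) = (\<Sum>x\<in>?S. F x ((c + d) x))"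
    by (rule lin_ext_superset[OF S]) (auto simp: F0)
  also have "\<dots> = (\<Sum>x\<in>?S. F x (c x)) + (\<Sum>x\<in>?S. F x (d x))"
    by (simp add: additive.add[OF assms(3)] sum.distrib)
  also have "\<dots> = lin_ext F c + lin_ext F d"
    by (subst (1 2) lin_ext_superset[OF S]) (auto simp: F0)
  finally show ?thesis .
qed

lemma lin_ext_uminus: "(\<And>x. additive (F x)) \<Longrightarrow> lin_ext F (- c) = - lin_ext F c"
  by (simp add: lin_ext_def additive.minus sum_negf)

lemma lin_ext_diff:
  "finsupp c \<Longrightarrow> finsupp d \<Longrightarrow> (\<And>x. additive (F x)) \<Longrightarrow> lin_ext F (c - d) = lin_ext F c - lin_ext F d"
  using lin_ext_add[of c "- d" F] by (simp add: lin_ext_uminus)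

lemma lin_ext_sum:
  assumes "\<And>i. i \<in> I \<Longrightarrow> finsupp (c i)" "\<And>x. additive (F x)"
  shows "lin_ext F (sum c I) = (\<Sum>i\<in>I. lin_ext F (c i))"
  using assms(1)
proof (induction I rule: infinite_finite_induct)
  case (insert i I)
  have "lin_ext F (sum c (insert i I)) = lin_ext F (c i + sum c I)"
    by (simp only: sum.insert[OF insert.hyps])
  also have "\<dots> = lin_ext F (c i) + lin_ext F (sum c I)"
    by (rule lin_ext_add[OF _ finsupp_sum assms(2)]) (use insert.prems in auto)
  also have "\<dots> = (\<Sum>i\<in>insert i I. lin_ext F (c i))"
    using insert.IH insert.prems by (simp add: sum.insert[OF insert.hyps])
  finally show ?case .
qed auto

lemma lin_ext_sum_list:
  assumes "\<And>w. w \<in> set ws \<Longrightarrow> finsupp (c w)" "\<And>x. additive (F x)"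
  shows "lin_ext F (\<Sum>w\<leftarrow>ws. c w) = (\<Sum>w\<leftarrow>ws. lin_ext F (c w))"
  using assms(1) by (induction ws) (simp_all add: lin_ext_add[OF _ finsupp_sum_list assms(2)])

lemma lin_ext_plus_fun: "lin_ext F c + lin_ext G c = lin_ext (\<lambda>x m. F x m + G x m) c"
  by (simp add: lin_ext_def sum.distrib)

lemma lin_ext_diff_fun:
  fixes F :: "'k \<Rightarrow> 'm::zero \<Rightarrow> 'n::ab_group_add"
  shows "lin_ext (\<lambda>x m. F x m - G x m) c = lin_ext F c - lin_ext G c"
  by (simp add: lin_ext_def sum_subtractf)

lemma lin_ext_lin_ext:
  assumes "finsupp c" "\<And>x. additive (F x)" "\<And>x m. finsupp (G x m)"
  shows "lin_ext F (lin_ext G c) = lin_ext (\<lambda>x m. lin_ext F (G x m)) c"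
  unfolding lin_ext_def[of G] by (subst lin_ext_sum) (use assms in \<open>auto simp: lin_ext_def\<close>)

lemma lin_ext_single_comp: "\<phi> 0 = 0 \<Longrightarrow> finsupp c \<Longrightarrow> lin_ext (\<lambda>x m. single x (\<phi> m)) c = \<phi> \<circ> c"
  by (auto simp: lin_ext_def fun_sum_apply single_def finsupp_def sum.delta fun_eq_iff)

lemma comp_lin_ext: "additive \<phi> \<Longrightarrow> \<phi> \<circ> lin_ext F c = lin_ext (\<lambda>x m. \<phi> \<circ> F x m) c"
  by (auto simp: lin_ext_def fun_eq_iff fun_sum_apply additive.sum)

lemma lin_ext_comp:
  assumes "finsupp c" "\<phi> 0 = 0" "\<And>x. F x 0 = 0"
  shows "lin_ext (\<lambda>x m. F x (\<phi> m)) c = lin_ext F (\<phi> \<circ> c)"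
proof -
  have "lin_ext F (\<phi> \<circ> c) = (\<Sum>x\<in>{x. c x \<noteq> 0}. F x ((\<phi> \<circ> c) x))"
    by (rule lin_ext_superset) (use assms in \<open>auto simp: finsupp_def\<close>)
  thus ?thesis by (simp add: lin_ext_def)
qed

lemma bd_eq_lin_ext: "bd act = lin_ext (bdgen act)"
  by (simp add: fun_eq_iff bd_def lin_ext_def)

lemma finsupp_bdgen: "finsupp (bdgen act x m)"
  unfolding bdgen_def by (auto intro!: finsupp_add finsupp_sum)

section \<open>Chain homotopy\<close>

definition htpy_gen :: "'a \<Rightarrow> 'a list \<Rightarrow> 'm::ab_group_add \<Rightarrow> 'a list \<Rightarrow> 'm" where
  "htpy_gen a x m = (\<Sum>i\<le>length x. single (ins_at i a x) (sgn_pow i m))"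

definition htpy :: "'a \<Rightarrow> ('a list \<Rightarrow> 'm::ab_group_add) \<Rightarrow> 'a list \<Rightarrow> 'm" where
  "htpy a = lin_ext (htpy_gen a)"

lemma additive_htpy_gen: "additive (htpy_gen a x)"
  by (rule additive.intro)
     (simp add: htpy_gen_def additive.add[OF additive_single] sgn_pow_plus sum.distrib)

lemma finsupp_htpy_gen: "finsupp (htpy_gen a x m)"
  unfolding htpy_gen_def by (rule finsupp_sum) simp

lemma finsupp_htpy: "finsupp (htpy a c)"
  unfolding htpy_def lin_ext_def by (rule finsupp_sum) (auto intro: finsupp_htpy_gen)

lemma htpy_apply:
  "htpy a c y = (\<Sum>x\<in>{x. c x \<noteq> 0}. \<Sum>i\<le>length x. if y = ins_at i a x then sgn_pow i (c x) else 0)"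
  by (simp add: htpy_def lin_ext_def htpy_gen_def fun_sum_apply single_def)

context additive_action
begin

text \<open>Functions \<open>'k \<Rightarrow> 'm\<close> form a module under \<open>fun_act\<close>; the boundary of a generator \<open>m [x]\<close>
  is the coboundary of the cochain \<open>y \<mapsto> m [y]\<close> with values in this module (\<open>cbd_single\<close>),
  so the chain homotopy is read off from the cochain homotopy.\<close>

definition fun_act :: "'a \<Rightarrow> ('k \<Rightarrow> 'm) \<Rightarrow> 'k \<Rightarrow> 'm" where
  "fun_act g F = act (- g) \<circ> F"

lemma additive_action_fun_act: "additive_action fun_act"
  by unfold_locales (simp add: fun_act_def fun_eq_iff act_add)

lemma fun_act_single: "fun_act g (single y m) = single y (act (- g) m)"
  by (auto simp: fun_act_def single_def fun_eq_iff)

lemma fun_act_htpy_gen: "fun_act g (htpy_gen a y m) = htpy_gen a y (act (- g) m)"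
  by (auto simp: htpy_gen_def fun_act_def fun_eq_iff fun_sum_apply single_def sgn_pow_def
      act_minus act_sum intro!: sum.cong)

lemma coch_htpy_single: "coch_htpy a (Suc (length y)) (\<lambda>y. single y m) y = htpy_gen a y m"
  by (simp add: coch_htpy_def htpy_gen_def sgn_pow_single)

lemma cbd_single: "length z = Suc q \<Longrightarrow> cbd fun_act q (\<lambda>y. single y m) z = bdgen act z m"
  by (auto simp: cbd_def bdgen_def fun_act_single sgn_pow_single atLeastLessThanSuc_atLeastAtMost)

lemma additive_bdgen: "additive (bdgen act x)"
  by (rule additive.intro)
     (simp add: bdgen_def additive.add[OF additive_single] sgn_pow_plus sum.distrib act_add)

lemma bd_htpy_gen_Cons:
  assumes x: "x = x0 # xs"
  shows "bd act (htpy_gen a x m) = coch_htpy a (Suc (Suc (length xs))) (cbd fun_act (Suc (length xs)) (\<lambda>y. single y m)) x"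
proof -
  have F0: "\<And>x. bdgen act x 0 = 0" using additive.zero[OF additive_bdgen] .
  have "bd act (htpy_gen a x m) = (\<Sum>i\<le>length x. lin_ext (bdgen act) (single (ins_at i a x) (sgn_pow i m)))"
    unfolding bd_eq_lin_ext htpy_gen_def by (rule lin_ext_sum) (auto intro: additive_bdgen)
  also have "\<dots> = (\<Sum>i\<le>length x. sgn_pow i (cbd fun_act (Suc (length xs)) (\<lambda>y. single y m) (ins_at i a x)))"
    using x by (simp add: lin_ext_single F0 additive.sgn_pow[OF additive_bdgen] cbd_single)
  finally show ?thesis using x by (simp add: coch_htpy_def)
qed

lemma htpy_bdgen_Cons:
  assumes x: "x = x0 # xs"
  shows "htpy a (bdgen act x m) = cbd fun_act (length xs) (coch_htpy a (Suc (length xs)) (\<lambda>y. single y m)) x"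
proof -
  let ?p = "length xs"
  have F0: "\<And>x. htpy_gen a x 0 = 0" using additive.zero[OF additive_htpy_gen] .
  have "htpy a (bdgen act x m) = htpy_gen a (tl x) (act (- hd x) m)
       + (\<Sum>i\<in>{1..<length x}. htpy_gen a (merge i x) (sgn_pow i m))
       + htpy_gen a (butlast x) (sgn_pow (length x) m)"
    using x unfolding htpy_def bdgen_def
    by (simp add: lin_ext_add lin_ext_sum finsupp_add finsupp_sum additive_htpy_gen
        lin_ext_single F0)
  also have "\<dots> = fun_act (hd x) (htpy_gen a (tl x) m)
       + (\<Sum>k\<in>{1..?p}. sgn_pow k (htpy_gen a (merge k x) m))
       + sgn_pow (Suc ?p) (htpy_gen a (butlast x) m)"
    using x by (simp add: fun_act_htpy_gen additive.sgn_pow[OF additive_htpy_gen]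
        atLeastLessThanSuc_atLeastAtMost)
  also have "\<dots> = cbd fun_act ?p (coch_htpy a (Suc ?p) (\<lambda>y. single y m)) x"
    using x coch_htpy_single[of a _ m, symmetric]
    by (simp add: cbd_def)
  finally show ?thesis .
qed

lemma bd_htpy_gen:
  "bd act (htpy_gen a x m) + htpy a (bdgen act x m) = single x (act (- a) m) - single x m"
proof (cases x)
  case Nil
  have "bd act (htpy_gen a x m) = bdgen act [a] m"
    using Nil by (simp add: htpy_gen_def bd_eq_lin_ext ins_at_def lin_ext_single
        additive.zero[OF additive_bdgen])
  also have "\<dots> = single x (act (- a) m) - single x m"
    using Nil by (simp add: bdgen_def sgn_pow_def additive.minus[OF additive_single])
  finally show ?thesis
    using Nil by (simp add: bdgen_def htpy_def)
next
  case (Cons x0 xs)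
  have "length x = Suc (length xs)" using Cons by simp
  from additive_action.cbd_coch_htpy[OF additive_action_fun_act this, of a "\<lambda>y. single y m"]
  show ?thesis
    by (simp add: bd_htpy_gen_Cons[OF Cons] htpy_bdgen_Cons[OF Cons] fun_act_single add.commute)
qed

lemma bd_htpy:
  assumes c: "finsupp c"
  shows "bd act (htpy a c) + htpy a (bd act c) = (act (- a) \<circ> c) - c"
proof -
  have "bd act (htpy a c) = lin_ext (\<lambda>x m. bd act (htpy_gen a x m)) c"
    unfolding bd_eq_lin_ext htpy_def by (rule lin_ext_lin_ext[OF c additive_bdgen finsupp_htpy_gen])
  moreover have "htpy a (bd act c) = lin_ext (\<lambda>x m. htpy a (bdgen act x m)) c"
    unfolding bd_eq_lin_ext htpy_def by (rule lin_ext_lin_ext[OF c additive_htpy_gen finsupp_bdgen])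
  ultimately have "bd act (htpy a c) + htpy a (bd act c)
      = lin_ext (\<lambda>x m. single x (act (- a) m)) c - lin_ext (\<lambda>x m. single x (id m)) c"
    by (simp add: lin_ext_plus_fun bd_htpy_gen lin_ext_diff_fun)
  also have "\<dots> = (act (- a) \<circ> c) - c"
    using lin_ext_single_comp[of "act (- a)" c] lin_ext_single_comp[of id c] c by simp
  finally show ?thesis .
qed

end

lemma add_subgroup_UNIV: "add_subgroup UNIV"
  by (simp add: add_subgroup_def)

lemma add_subgroup_zero: "add_subgroup S \<Longrightarrow> 0 \<in> S"
  and add_subgroup_diff: "add_subgroup S \<Longrightarrow> x \<in> S \<Longrightarrow> y \<in> S \<Longrightarrow> x - y \<in> S"
  by (simp_all add: add_subgroup_def)

lemma add_subgroup_uminus: "add_subgroup S \<Longrightarrow> x \<in> S \<Longrightarrow> - x \<in> S"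
  using add_subgroup_diff[of S 0 x] by (simp add: add_subgroup_zero)

lemma add_subgroup_add: "add_subgroup S \<Longrightarrow> x \<in> S \<Longrightarrow> y \<in> S \<Longrightarrow> x + y \<in> S"
  using add_subgroup_diff[of S x "- y"] by (simp add: add_subgroup_uminus)

lemma add_subgroup_sum: "add_subgroup S \<Longrightarrow> (\<And>i. i \<in> I \<Longrightarrow> F i \<in> S) \<Longrightarrow> sum F I \<in> S"
  by (induction I rule: infinite_finite_induct) (auto simp: add_subgroup_zero add_subgroup_add)

lemma add_subgroup_sgn_pow: "add_subgroup S \<Longrightarrow> x \<in> S \<Longrightarrow> sgn_pow i x \<in> S"
  by (simp add: sgn_pow_def add_subgroup_uminus)

lemma add_subgroup_coinv_sub: "add_subgroup (coinv_sub act G)"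
  unfolding add_subgroup_def coinv_sub_def by (auto intro: add_subgroup_zero add_subgroup_diff)

lemma coinv_sub_gen: "g \<in> G \<Longrightarrow> m - act g m \<in> coinv_sub act G"
  unfolding coinv_sub_def by auto

lemma coinv_sub_mono: "G \<subseteq> H \<Longrightarrow> coinv_sub act G \<subseteq> coinv_sub act H"
  unfolding coinv_sub_def by blast

lemma coinv_sub_map:
  assumes "additive \<phi>" "\<And>m g. g \<in> G \<Longrightarrow> \<phi> (m - act g m) \<in> coinv_sub act H"
    and "x \<in> coinv_sub act G"
  shows "\<phi> x \<in> coinv_sub act H"
proof -
  have "add_subgroup {x. \<phi> x \<in> coinv_sub act H}"
    using add_subgroup_coinv_sub[of act H] assms(1)
    by (auto simp: add_subgroup_def additive.zero additive.diff)
  moreover have "{m - act g m | m g. g \<in> G} \<subseteq> {x. \<phi> x \<in> coinv_sub act H}"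
    using assms(2) by auto
  ultimately show ?thesis
    using assms(3) unfolding coinv_sub_def[of act G] by blast
qed

lemma invariants_antimono: "G \<subseteq> H \<Longrightarrow> invariants act H \<subseteq> invariants act G"
  unfolding invariants_def by blast

context additive_action
begin

lemma add_subgroup_invariants: "add_subgroup (invariants act G)"
  by (simp add: add_subgroup_def invariants_def act_diff)

lemma invariants_map:
  "(\<And>g x. \<phi> (act g x) = act g (\<phi> x)) \<Longrightarrow> x \<in> invariants act G \<Longrightarrow> \<phi> x \<in> invariants act G"
  by (simp add: invariants_def) metis

lemma coinv_sub_equivariant_map:
  assumes "additive \<phi>" "\<And>g x. \<phi> (act g x) = act g (\<phi> x)" "x \<in> coinv_sub act G"
  shows "\<phi> x \<in> coinv_sub act G"
  by (rule coinv_sub_map[OF assms(1) _ assms(3)])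
     (simp add: additive.diff[OF assms(1)] assms(2) coinv_sub_gen)

end

lemma chainsI:
  "finsupp c \<Longrightarrow> (\<And>x. c x \<noteq> 0 \<Longrightarrow> length x = n) \<Longrightarrow> (\<And>x. c x \<in> S) \<Longrightarrow> c \<in> chains n S"
  by (simp add: chains_def finsupp_def)

lemma chainsD:
  assumes "c \<in> chains n S"
  shows "finsupp c" "c x \<noteq> 0 \<Longrightarrow> length x = n" "c x \<in> S"
  using assms by (auto simp: chains_def finsupp_def)

lemma chains_mono: "S \<subseteq> T \<Longrightarrow> chains n S \<subseteq> chains n T"
  by (auto simp: chains_def)

lemma chains_zero: "add_subgroup S \<Longrightarrow> 0 \<in> chains n S"
  by (auto simp: chains_def add_subgroup_zero)

lemma chains_add:
  assumes S: "add_subgroup S" and c: "c \<in> chains n S" and d: "d \<in> chains n S"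
  shows "c + d \<in> chains n S"
proof (rule chainsI)
  show "finsupp (c + d)"
    using chainsD(1)[OF c] chainsD(1)[OF d] by (rule finsupp_add)
  show "length x = n" if "(c + d) x \<noteq> 0" for x
    using that chainsD(2)[OF c, of x] chainsD(2)[OF d, of x] by fastforce
  show "(c + d) x \<in> S" for x
    using add_subgroup_add[OF S chainsD(3)[OF c] chainsD(3)[OF d]] by simp
qed

lemma chains_uminus: "add_subgroup S \<Longrightarrow> c \<in> chains n S \<Longrightarrow> - c \<in> chains n S"
  unfolding chains_def by (auto simp: add_subgroup_uminus)

lemma chains_diff: "add_subgroup S \<Longrightarrow> c \<in> chains n S \<Longrightarrow> d \<in> chains n S \<Longrightarrow> c - d \<in> chains n S"
  using chains_add[of S c n "- d"] chains_uminus[of S d n] by simp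

lemma chains_comp:
  assumes "\<phi> 0 = 0" "\<And>x. x \<in> S \<Longrightarrow> \<phi> x \<in> T" and c: "c \<in> chains n S"
  shows "\<phi> \<circ> c \<in> chains n T"
proof (rule chainsI)
  show "finsupp (\<phi> \<circ> c)"
    using assms(1) chainsD(1)[OF c] by (rule finsupp_comp)
  show "length x = n" if "(\<phi> \<circ> c) x \<noteq> 0" for x
    using that assms(1) chainsD(2)[OF c, of x] by fastforce
  show "(\<phi> \<circ> c) x \<in> T" for x
    using assms(2)[OF chainsD(3)[OF c]] by simp
qed

lemma chains_sum_list:
  "add_subgroup S \<Longrightarrow> (\<And>w. w \<in> set ws \<Longrightarrow> F w \<in> chains n S) \<Longrightarrow> (\<Sum>w\<leftarrow>ws. F w) \<in> chains n S"
  by (induction ws) (auto simp: chains_zero chains_add)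

lemma htpy_chains:
  assumes S: "add_subgroup S" and c: "c \<in> chains n S"
  shows "htpy a c \<in> chains (Suc n) S"
proof (rule chainsI)
  fix y
  show "htpy a c y \<in> S"
    unfolding htpy_apply
    by (intro add_subgroup_sum[OF S])
       (auto simp: add_subgroup_zero[OF S] add_subgroup_sgn_pow[OF S] chainsD[OF c])
  show "length y = Suc n" if "htpy a c y \<noteq> 0"
  proof (rule ccontr)
    assume "length y \<noteq> Suc n"
    then have "htpy a c y = 0"
      unfolding htpy_apply by (intro sum.neutral ballI) (use chainsD(2)[OF c] in auto)
    with that show False by simp
  qed
qed (rule finsupp_htpy)

lemma bd_chains_0: "c \<in> chains 0 S \<Longrightarrow> bd act c = 0"
  unfolding bd_def by (rule sum.neutral) (auto simp: bdgen_def dest: chainsD(2))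

lemma cochains_mono: "S \<subseteq> T \<Longrightarrow> cochains n S \<subseteq> cochains n T"
  by (auto simp: cochains_def)

lemma cochains_zero: "add_subgroup S \<Longrightarrow> 0 \<in> cochains n S"
  by (auto simp: cochains_def add_subgroup_zero)

lemma cochains_add:
  "add_subgroup S \<Longrightarrow> c \<in> cochains n S \<Longrightarrow> d \<in> cochains n S \<Longrightarrow> c + d \<in> cochains n S"
  by (auto simp: cochains_def add_subgroup_add)

lemma cochains_uminus: "add_subgroup S \<Longrightarrow> c \<in> cochains n S \<Longrightarrow> - c \<in> cochains n S"
  by (auto simp: cochains_def add_subgroup_uminus)

lemma cochains_diff:
  "add_subgroup S \<Longrightarrow> c \<in> cochains n S \<Longrightarrow> d \<in> cochains n S \<Longrightarrow> c - d \<in> cochains n S"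
  using cochains_add[of S c n "- d"] cochains_uminus[of S d n] by simp

lemma cochains_comp:
  "\<phi> 0 = 0 \<Longrightarrow> (\<And>x. x \<in> S \<Longrightarrow> \<phi> x \<in> T) \<Longrightarrow> c \<in> cochains n S \<Longrightarrow> \<phi> \<circ> c \<in> cochains n T"
  by (auto simp: cochains_def)

lemma cochains_sum_list:
  "add_subgroup S \<Longrightarrow> (\<And>w. w \<in> set ws \<Longrightarrow> F w \<in> cochains n S) \<Longrightarrow> (\<Sum>w\<leftarrow>ws. F w) \<in> cochains n S"
  by (induction ws) (auto simp: cochains_zero cochains_add)

lemma coch_htpy_cochains:
  "add_subgroup N \<Longrightarrow> f \<in> cochains (Suc k) N \<Longrightarrow> coch_htpy a (Suc k) f \<in> cochains k N"
  by (auto simp: cochains_def coch_htpy_def intro!: add_subgroup_sum add_subgroup_sgn_pow)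

context additive_action
begin

lemma bd_add: "finsupp c \<Longrightarrow> finsupp d \<Longrightarrow> bd act (c + d) = bd act c + bd act d"
  unfolding bd_eq_lin_ext by (rule lin_ext_add) (auto intro: additive_bdgen)

lemma bd_uminus: "bd act (- c) = - bd act c"
  unfolding bd_eq_lin_ext by (rule lin_ext_uminus) (rule additive_bdgen)

lemma bd_diff: "finsupp c \<Longrightarrow> finsupp d \<Longrightarrow> bd act (c - d) = bd act c - bd act d"
  unfolding bd_eq_lin_ext by (rule lin_ext_diff) (auto intro: additive_bdgen)

lemma bd_sum_list:
  "(\<And>w. w \<in> set ws \<Longrightarrow> finsupp (F w)) \<Longrightarrow> bd act (\<Sum>w\<leftarrow>ws. F w) = (\<Sum>w\<leftarrow>ws. bd act (F w))"
  unfolding bd_eq_lin_ext by (rule lin_ext_sum_list) (auto intro: additive_bdgen)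

lemma bdgen_comp:
  assumes "additive \<phi>" "\<And>g x. \<phi> (act g x) = act g (\<phi> x)"
  shows "bdgen act x (\<phi> m) = \<phi> \<circ> bdgen act x m"
  by (auto simp: bdgen_def fun_eq_iff additive.add[OF assms(1)] additive.zero[OF assms(1)]
      additive.sum[OF assms(1)] additive.sgn_pow[OF assms(1)] assms(2) single_def fun_sum_apply
      intro!: sum.cong)

lemma bd_comp:
  assumes "additive \<phi>" "\<And>g x. \<phi> (act g x) = act g (\<phi> x)" "finsupp c"
  shows "\<phi> \<circ> bd act c = bd act (\<phi> \<circ> c)"
proof -
  have "\<phi> \<circ> bd act c = lin_ext (\<lambda>x m. bdgen act x (\<phi> m)) c"
    unfolding bd_eq_lin_ext comp_lin_ext[OF assms(1)] by (simp add: bdgen_comp[OF assms(1,2)])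
  also have "\<dots> = bd act (\<phi> \<circ> c)"
    unfolding bd_eq_lin_ext
    using lin_ext_comp[OF assms(3), of \<phi> "bdgen act"] additive.zero[OF assms(1)]
      additive.zero[OF additive_bdgen]
    by blast
  finally show ?thesis .
qed

lemma additive_cbd: "additive (cbd act k)"
  by (intro additive.intro ext) (simp add: cbd_def act_add sgn_pow_plus sum.distrib)

lemma cbd_comp:
  assumes "additive \<phi>" "\<And>g x. \<phi> (act g x) = act g (\<phi> x)"
  shows "\<phi> \<circ> cbd act k f = cbd act k (\<phi> \<circ> f)"
  by (auto simp: cbd_def fun_eq_iff additive.add[OF assms(1)] additive.zero[OF assms(1)]
      additive.sum[OF assms(1)] additive.sgn_pow[OF assms(1)] assms(2))

end

lemma bij_betw_quotient_map:
  assumes eqR: "equiv C R" and eqR': "equiv C' R'" and sub: "C \<subseteq> C'" and RR: "R \<subseteq> R'"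
    and reflect: "\<And>c d. c \<in> C \<Longrightarrow> d \<in> C \<Longrightarrow> (c, d) \<in> R' \<Longrightarrow> (c, d) \<in> R"
    and lift: "\<And>c'. c' \<in> C' \<Longrightarrow> \<exists>c\<in>C. (c, c') \<in> R'"
  shows "bij_betw (\<lambda>X. \<Union> ((\<lambda>c. R' `` {c}) ` X)) (C // R) (C' // R')"
proof -
  let ?F = "\<lambda>X. \<Union> ((\<lambda>c. R' `` {c}) ` X)"
  have img: "?F (R `` {c}) = R' `` {c}" if c: "c \<in> C" for c
  proof
    show "?F (R `` {c}) \<subseteq> R' `` {c}"
    proof
      fix y assume "y \<in> ?F (R `` {c})"
      then obtain d where d: "(c, d) \<in> R" "y \<in> R' `` {d}" by auto
      have "R' `` {d} = R' `` {c}"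
        using d(1) RR equiv_class_eq[OF eqR'] equiv_class_eq_iff[OF eqR'] by (metis subsetD)
      with d(2) show "y \<in> R' `` {c}" by simp
    qed
    show "R' `` {c} \<subseteq> ?F (R `` {c})"
      using c equiv_class_self[OF eqR c] by blast
  qed
  show ?thesis
  proof (rule bij_betw_imageI)
    show "inj_on ?F (C // R)"
    proof (rule inj_onI)
      fix X Y assume X: "X \<in> C // R" and Y: "Y \<in> C // R" and e: "?F X = ?F Y"
      obtain c where c: "c \<in> C" "X = R `` {c}" using X by (auto elim: quotientE)
      obtain d where d: "d \<in> C" "Y = R `` {d}" using Y by (auto elim: quotientE)
      have "R' `` {c} = R' `` {d}" using e c d img by simp
      then have "(c, d) \<in> R'" using eq_equiv_class_iff[OF eqR'] c d sub by blast
      then have "(c, d) \<in> R" using reflect c d by blast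
      then show "X = Y" using c d equiv_class_eq[OF eqR] by simp
    qed
    show "?F ` (C // R) = C' // R'"
    proof
      show "?F ` (C // R) \<subseteq> C' // R'"
      proof
        fix Z assume "Z \<in> ?F ` (C // R)"
        then obtain c where "c \<in> C" "Z = ?F (R `` {c})" by (auto elim: quotientE)
        then show "Z \<in> C' // R'" using img sub by (auto intro: quotientI)
      qed
      show "C' // R' \<subseteq> ?F ` (C // R)"
      proof
        fix Z assume "Z \<in> C' // R'"
        then obtain c' where c': "c' \<in> C'" "Z = R' `` {c'}" by (auto elim: quotientE)
        obtain c where c: "c \<in> C" "(c, c') \<in> R'" using lift c' by blast
        have "Z = ?F (R `` {c})" using c' c equiv_class_eq[OF eqR'] img by simp
        with c show "Z \<in> ?F ` (C // R)" by (auto intro: quotientI)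
      qed
    qed
  qed
qed

context additive_action
begin

lemma coboundaries_Suc: "coboundaries act (Suc k) N = cbd act k ` cochains k N"
  by (simp add: coboundaries_def)

lemma coboundaries_zero:
  assumes "add_subgroup N"
  shows "0 \<in> coboundaries act n N"
proof (cases n)
  case (Suc k)
  have "cbd act k 0 \<in> cbd act k ` cochains k N"
    using cochains_zero[OF assms] by (rule imageI)
  then show ?thesis
    using Suc additive.zero[OF additive_cbd] by (simp add: coboundaries_Suc)
qed (simp add: coboundaries_def)

lemma coboundaries_uminus:
  assumes N: "add_subgroup N" and x: "x \<in> coboundaries act n N"
  shows "- x \<in> coboundaries act n N"
proof (cases n)
  case (Suc k)
  then obtain g where g: "g \<in> cochains k N" "x = cbd act k g"
    using x by (auto simp: coboundaries_Suc)
  have "cbd act k (- g) \<in> cbd act k ` cochains k N"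
    using cochains_uminus[OF N g(1)] by (rule imageI)
  then show ?thesis
    using Suc g additive.minus[OF additive_cbd] by (simp add: coboundaries_Suc)
qed (use x in \<open>simp add: coboundaries_def\<close>)

lemma coboundaries_add:
  assumes N: "add_subgroup N" and x: "x \<in> coboundaries act n N" and y: "y \<in> coboundaries act n N"
  shows "x + y \<in> coboundaries act n N"
proof (cases n)
  case (Suc k)
  then obtain g h where g: "g \<in> cochains k N" "x = cbd act k g"
    and h: "h \<in> cochains k N" "y = cbd act k h"
    using x y by (auto simp: coboundaries_Suc)
  have "cbd act k (g + h) \<in> cbd act k ` cochains k N"
    using cochains_add[OF N g(1) h(1)] by (rule imageI)
  then show ?thesis
    using Suc g h additive.add[OF additive_cbd] by (simp add: coboundaries_Suc)
qed (use x y in \<open>simp add: coboundaries_def\<close>)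

lemma coboundaries_mono: "N \<subseteq> N' \<Longrightarrow> coboundaries act n N \<subseteq> coboundaries act n N'"
  using cochains_mono[of N N'] by (cases n) (auto simp: coboundaries_def)

lemma cocycles_mono: "N \<subseteq> N' \<Longrightarrow> cocycles act n N \<subseteq> cocycles act n N'"
  using cochains_mono[of N N' n] by (auto simp: cocycles_def)

lemma crel_mono: "N \<subseteq> N' \<Longrightarrow> crel act n N \<subseteq> crel act n N'"
  using cocycles_mono[of N N' n] coboundaries_mono[of N N' n] unfolding crel_def by blast

lemma equiv_crel:
  assumes N: "add_subgroup N"
  shows "equiv (cocycles act n N) (crel act n N)"
proof (rule equivI)
  show "refl_on (cocycles act n N) (crel act n N)"
    by (auto simp: refl_on_def crel_def coboundaries_zero[OF N])
  show "sym (crel act n N)"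
    using coboundaries_uminus[OF N] by (fastforce simp: sym_def crel_def)
  show "trans (crel act n N)"
    using coboundaries_add[OF N] by (fastforce simp: trans_def crel_def)
qed (auto simp: crel_def)

lemma hcycles_mono: "S \<subseteq> T \<Longrightarrow> hcycles act n S \<subseteq> hcycles act n T"
  using chains_mono[of S T "n - 1"] by (auto simp: hcycles_def)

lemma hrel_mono: "S \<subseteq> T \<Longrightarrow> hrel act n S \<subseteq> hrel act n T"
  using hcycles_mono[of S T n] chains_mono[of S T n] unfolding hrel_def by blast

lemma equiv_hrel:
  assumes S: "add_subgroup S"
  shows "equiv (hcycles act n S) (hrel act n S)"
proof (rule equivI)
  show "hrel act n S \<subseteq> hcycles act n S \<times> hcycles act n S"
    by (auto simp: hrel_def)
  show "refl_on (hcycles act n S) (hrel act n S)"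
  proof (rule refl_onI)
    fix a assume "a \<in> hcycles act n S"
    moreover have "a - a = 0 + bd act 0"
      by (simp add: bd_eq_lin_ext)
    ultimately show "(a, a) \<in> hrel act n S"
      using chains_zero[OF S] chains_zero[OF add_subgroup_UNIV] unfolding hrel_def by blast
  qed
  show "sym (hrel act n S)"
  proof (rule symI)
    fix a b assume "(a, b) \<in> hrel act n S"
    then obtain s d where ab: "a \<in> hcycles act n S" "b \<in> hcycles act n S" and
      s: "s \<in> chains n S" and d: "d \<in> chains (Suc n) UNIV" and e: "a - b = s + bd act d"
      unfolding hrel_def by blast
    have "b - a = - s + bd act (- d)"
      using e by (simp add: bd_uminus algebra_simps)
    then show "(b, a) \<in> hrel act n S"
      using ab chains_uminus[OF S s] chains_uminus[OF add_subgroup_UNIV d]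
      unfolding hrel_def by blast
  qed
  show "trans (hrel act n S)"
  proof (rule transI)
    fix a b c assume "(a, b) \<in> hrel act n S" "(b, c) \<in> hrel act n S"
    then obtain s d s' d' where ac: "a \<in> hcycles act n S" "c \<in> hcycles act n S" and
      s: "s \<in> chains n S" "s' \<in> chains n S" and
      d: "d \<in> chains (Suc n) UNIV" "d' \<in> chains (Suc n) UNIV" and
      e: "a - b = s + bd act d" "b - c = s' + bd act d'"
      unfolding hrel_def by blast
    have "a - c = (s + s') + bd act (d + d')"
      using e chainsD(1)[OF d(1)] chainsD(1)[OF d(2)] by (simp add: bd_add algebra_simps)
    then show "(a, c) \<in> hrel act n S"
      using ac chains_add[OF S s] chains_add[OF add_subgroup_UNIV d]
      unfolding hrel_def by blast
  qed
qed

end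

section \<open>Averaging over translates\<close>

definition nat_mult :: "nat \<Rightarrow> 'a::comm_monoid_add \<Rightarrow> 'a" where
  "nat_mult n x = (\<Sum>_<n. x)"

lemma nat_mult_0 [simp]: "nat_mult 0 x = 0"
  and nat_mult_Suc: "nat_mult (Suc n) x = x + nat_mult n x"
  by (simp_all add: nat_mult_def add.commute)

lemma nat_mult_add: "nat_mult (m + n) x = nat_mult m x + nat_mult n x"
  by (induction m) (simp_all add: nat_mult_Suc add.assoc)

lemma nat_mult_mult: "nat_mult (m * n) x = nat_mult m (nat_mult n x)"
  by (induction m) (simp_all add: nat_mult_add nat_mult_Suc)

lemma additive_nat_mult: "additive (nat_mult n :: 'a::ab_group_add \<Rightarrow> 'a)"
  by (rule additive.intro) (simp add: nat_mult_def sum.distrib)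

lemma sum_list_map_const: "(\<Sum>w\<leftarrow>ws. x) = nat_mult (length ws) x"
  by (induction ws) (simp_all add: nat_mult_Suc)

lemma bij_nat_mult_power: "bij (nat_mult l :: 'a::comm_monoid_add \<Rightarrow> 'a) \<Longrightarrow> bij (nat_mult (l ^ k) :: 'a \<Rightarrow> 'a)"
proof (induction k)
  case 0
  have "nat_mult (l ^ 0) = (id :: 'a \<Rightarrow> 'a)" by (simp add: fun_eq_iff nat_mult_Suc)
  then show ?case by (simp only: bij_id)
next
  case (Suc k)
  have "nat_mult (l ^ Suc k) = nat_mult l \<circ> (nat_mult (l ^ k) :: 'a \<Rightarrow> 'a)"
    by (simp add: fun_eq_iff nat_mult_mult)
  then show ?case
    using bij_comp[OF Suc.IH[OF Suc.prems] Suc.prems] by (simp only:)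
qed

locale group_module = additive_action act for act :: "'a::ab_group_add \<Rightarrow> 'm::ab_group_add \<Rightarrow> 'm" +
  assumes act_0: "act 0 x = x"
    and act_plus: "act (g + h) x = act g (act h x)"
begin

lemma act_commute: "act g (act h x) = act h (act g x)"
  by (metis act_plus add.commute)

lemma act_nat_mult: "act g (nat_mult n x) = nat_mult n (act g x)"
  by (simp add: nat_mult_def act_sum)

lemma act_coinv_sub: "y \<in> coinv_sub act G \<Longrightarrow> act g y \<in> coinv_sub act G"
  by (rule coinv_sub_equivariant_map[OF additive_act act_commute])

definition sum_translates :: "'a list \<Rightarrow> 'm \<Rightarrow> 'm" where
  "sum_translates ws x = (\<Sum>w\<leftarrow>ws. act w x)"

lemma additive_sum_translates: "additive (sum_translates ws)"
  by (rule additive.intro) (simp add: sum_translates_def act_add sum_list_addf)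

lemma sum_translates_act: "sum_translates ws (act g x) = act g (sum_translates ws x)"
  by (simp add: sum_translates_def act_sum_list act_commute)

lemma sum_translates_append: "sum_translates (xs @ ys) x = sum_translates xs x + sum_translates ys x"
  by (simp add: sum_translates_def)

lemma sum_translates_concat: "sum_translates (concat wss) x = (\<Sum>ws\<leftarrow>wss. sum_translates ws x)"
  by (induction wss) (simp_all add: sum_translates_append, simp add: sum_translates_def)

lemma sum_translates_shift: "sum_translates (map (\<lambda>w. c + w) ws) x = act c (sum_translates ws x)"
  by (induction ws) (simp_all add: sum_translates_def act_plus act_add)

end

locale averaging = group_module act for act :: "'a::ab_group_add \<Rightarrow> 'm::ab_group_add \<Rightarrow> 'm" +
  fixes W :: "'a list" and B :: "'a set"
  assumes bij_nat_mult_length: "bij (nat_mult (length W) :: 'm \<Rightarrow> 'm)"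
    and sum_translates_invariants: "x \<in> invariants act B \<Longrightarrow> sum_translates W x \<in> invariants act UNIV"
    and sum_translates_coinv_sub: "act g (sum_translates W x) - sum_translates W x \<in> coinv_sub act B"
begin

definition divide_length :: "'m \<Rightarrow> 'm" where
  "divide_length = inv (nat_mult (length W))"

definition average :: "'m \<Rightarrow> 'm" where
  "average x = divide_length (sum_translates W x)"

lemma divide_length_nat_mult: "divide_length (nat_mult (length W) x) = x"
  and nat_mult_divide_length: "nat_mult (length W) (divide_length x) = x"
  using bij_nat_mult_length
  by (simp_all add: divide_length_def bij_is_inj bij_is_surj surj_f_inv_f)

lemma additive_divide_length: "additive divide_length"
proof (rule additive.intro)
  fix x y
  have "divide_length (x + y)
      = divide_length (nat_mult (length W) (divide_length x) + nat_mult (length W) (divide_length y))"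
    by (simp add: nat_mult_divide_length)
  also have "\<dots> = divide_length x + divide_length y"
    by (simp add: additive.add[OF additive_nat_mult, symmetric] divide_length_nat_mult)
  finally show "divide_length (x + y) = divide_length x + divide_length y" .
qed

lemma divide_length_act: "divide_length (act g x) = act g (divide_length x)"
  by (metis act_nat_mult divide_length_nat_mult nat_mult_divide_length)

lemma additive_average: "additive average"
  by (rule additive.intro)
     (simp add: average_def additive.add[OF additive_sum_translates] additive.add[OF additive_divide_length])

lemma average_act: "average (act g x) = act g (average x)"
  by (simp add: average_def sum_translates_act divide_length_act)

lemma average_zero [simp]: "average 0 = 0"
  by (rule additive.zero[OF additive_average])

lemma average_fixes_invariants: "x \<in> invariants act UNIV \<Longrightarrow> average x = x"
  by (simp add: average_def sum_translates_def invariants_def sum_list_map_const divide_length_nat_mult)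

lemma average_invariants: "x \<in> invariants act B \<Longrightarrow> average x \<in> invariants act UNIV"
  unfolding average_def by (rule invariants_map[OF divide_length_act sum_translates_invariants])

lemma average_coinv_sub:
  assumes x: "x \<in> coinv_sub act UNIV"
  shows "average x \<in> coinv_sub act B"
proof -
  have "sum_translates W (m - act g m) \<in> coinv_sub act B" for m g
  proof -
    have "sum_translates W (m - act g m) = - (act g (sum_translates W m) - sum_translates W m)"
      by (simp add: additive.diff[OF additive_sum_translates] sum_translates_act)
    then show ?thesis
      using add_subgroup_uminus[OF add_subgroup_coinv_sub sum_translates_coinv_sub] by simp
  qed
  then have "sum_translates W x \<in> coinv_sub act B"
    using coinv_sub_map[OF additive_sum_translates _ x] by blast
  then show ?thesis
    unfolding average_def by (rule coinv_sub_equivariant_map[OF additive_divide_length divide_length_act])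
qed

lemma average_minus_id: "(average \<circ> c) - c = divide_length \<circ> (\<Sum>w\<leftarrow>W. (act w \<circ> c) - c)"
proof
  fix y
  have "divide_length (\<Sum>w\<leftarrow>W. act w (c y) - c y)
      = divide_length (sum_translates W (c y)) - divide_length (\<Sum>w\<leftarrow>W. c y)"
    by (simp add: sum_list_subtractf sum_translates_def additive.diff[OF additive_divide_length])
  then show "((average \<circ> c) - c) y = (divide_length \<circ> (\<Sum>w\<leftarrow>W. (act w \<circ> c) - c)) y"
    by (simp add: fun_sum_list_apply average_def sum_list_map_const divide_length_nat_mult)
qed

definition average_htpy :: "('a list \<Rightarrow> 'm) \<Rightarrow> 'a list \<Rightarrow> 'm" where
  "average_htpy c = divide_length \<circ> (\<Sum>w\<leftarrow>W. htpy (- w) c)"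

lemma bd_average_htpy:
  assumes c: "finsupp c"
  shows "(average \<circ> c) - c = bd act (average_htpy c) + average_htpy (bd act c)"
proof -
  have "(act w \<circ> c) - c = bd act (htpy (- w) c) + htpy (- w) (bd act c)" for w
    using bd_htpy[OF c, of "- w"] by simp
  then have "(average \<circ> c) - c = divide_length \<circ> ((\<Sum>w\<leftarrow>W. bd act (htpy (- w) c))
      + (\<Sum>w\<leftarrow>W. htpy (- w) (bd act c)))"
    by (simp add: average_minus_id sum_list_addf)
  also have "\<dots> = (divide_length \<circ> bd act (\<Sum>w\<leftarrow>W. htpy (- w) c)) + average_htpy (bd act c)"
    by (simp add: fun_eq_iff additive.add[OF additive_divide_length] bd_sum_list finsupp_htpy
        average_htpy_def)
  also have "divide_length \<circ> bd act (\<Sum>w\<leftarrow>W. htpy (- w) c) = bd act (average_htpy c)"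
    unfolding average_htpy_def
    by (rule bd_comp[OF additive_divide_length divide_length_act]) (simp add: finsupp_sum_list finsupp_htpy)
  finally show ?thesis .
qed

lemma average_htpy_zero [simp]: "average_htpy 0 = 0"
proof -
  have "(\<Sum>w\<leftarrow>ws. htpy (- w) (0 :: 'a list \<Rightarrow> 'm)) = 0" for ws
    by (induction ws) (simp_all add: htpy_def lin_ext_def)
  then show ?thesis
    by (simp add: average_htpy_def fun_eq_iff additive.zero[OF additive_divide_length])
qed

lemma finsupp_average_htpy: "finsupp (average_htpy c)"
  unfolding average_htpy_def
  by (rule finsupp_comp[where \<phi>=divide_length, OF additive.zero[OF additive_divide_length]]) (simp add: finsupp_sum_list finsupp_htpy)

lemma average_htpy_chains:
  assumes S: "add_subgroup S" and "\<And>x. x \<in> S \<Longrightarrow> divide_length x \<in> S" and c: "c \<in> chains n S"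
  shows "average_htpy c \<in> chains (Suc n) S"
  unfolding average_htpy_def
  by (rule chains_comp[where \<phi>=divide_length, OF additive.zero[OF additive_divide_length] assms(2)])
     (auto intro!: chains_sum_list S htpy_chains c)

lemma average_htpy_bd_chains:
  assumes S: "add_subgroup S" and "\<And>x. x \<in> S \<Longrightarrow> divide_length x \<in> S"
    and c: "c \<in> chains n UNIV" and bd: "bd act c \<in> chains (n - 1) S"
  shows "average_htpy (bd act c) \<in> chains n S"
proof (cases n)
  case 0
  then have "bd act c = 0" using bd_chains_0 c by blast
  then show ?thesis
    using chains_zero[OF S] by simp
next
  case (Suc m)
  then show ?thesis using average_htpy_chains[OF S assms(2), of "bd act c" m] bd by simp
qed

lemma divide_length_coinv_sub: "x \<in> coinv_sub act G \<Longrightarrow> divide_length x \<in> coinv_sub act G"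
  by (rule coinv_sub_equivariant_map[OF additive_divide_length divide_length_act])

lemma hrel_reflect:
  assumes c1: "c1 \<in> hcycles act n (coinv_sub act B)" and c2: "c2 \<in> hcycles act n (coinv_sub act B)"
    and rel: "(c1, c2) \<in> hrel act n (coinv_sub act UNIV)"
  shows "(c1, c2) \<in> hrel act n (coinv_sub act B)"
proof -
  let ?S = "coinv_sub act B"
  have S: "add_subgroup ?S" by (rule add_subgroup_coinv_sub)
  obtain s d where s: "s \<in> chains n (coinv_sub act UNIV)" and d: "d \<in> chains (Suc n) UNIV"
    and sd: "c1 - c2 = s + bd act d"
    using rel unfolding hrel_def by blast
  define e where "e = c1 - c2"
  have e: "e \<in> chains n UNIV" "bd act e \<in> chains (n - 1) ?S"
    using c1 c2 chains_diff[OF add_subgroup_UNIV] chains_diff[OF S]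
    by (auto simp: hcycles_def e_def bd_diff chainsD(1))
  have "average \<circ> e = (average \<circ> s) + bd act (average \<circ> d)"
    using bd_comp[OF additive_average average_act chainsD(1)[OF d]]
    by (simp add: e_def sd fun_eq_iff additive.add[OF additive_average])
  then have "e = ((average \<circ> s) - average_htpy (bd act e)) + bd act ((average \<circ> d) - average_htpy e)"
    using bd_average_htpy[OF chainsD(1)[OF e(1)]]
    by (simp add: bd_diff finsupp_average_htpy finsupp_comp chainsD(1)[OF d] algebra_simps)
  moreover have "(average \<circ> s) - average_htpy (bd act e) \<in> chains n ?S"
    using chains_comp[where \<phi>=average, OF average_zero average_coinv_sub s]
      average_htpy_bd_chains[OF S divide_length_coinv_sub e] by (rule chains_diff[OF S])
  moreover have "(average \<circ> d) - average_htpy e \<in> chains (Suc n) UNIV"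
    by (intro chains_diff[OF add_subgroup_UNIV] chains_comp[where \<phi>=average, OF average_zero _ d]
        average_htpy_chains[OF add_subgroup_UNIV _ e(1)]) simp_all
  ultimately show ?thesis
    using c1 c2 unfolding hrel_def e_def by blast
qed

lemma hcycles_lift:
  assumes c: "c \<in> hcycles act n (coinv_sub act UNIV)"
  shows "\<exists>c'\<in>hcycles act n (coinv_sub act B). (c', c) \<in> hrel act n (coinv_sub act UNIV)"
proof -
  let ?T = "coinv_sub act UNIV"
  have cT: "c \<in> chains n UNIV" "bd act c \<in> chains (n - 1) ?T"
    using c by (auto simp: hcycles_def)
  have "average \<circ> c \<in> chains n UNIV"
    by (rule chains_comp[where \<phi>=average and S=UNIV]) (simp_all add: cT(1))
  moreover have "bd act (average \<circ> c) \<in> chains (n - 1) (coinv_sub act B)"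
    using bd_comp[OF additive_average average_act chainsD(1)[OF cT(1)]]
      chains_comp[where \<phi>=average, OF average_zero average_coinv_sub cT(2)] by simp
  ultimately have avg: "average \<circ> c \<in> hcycles act n (coinv_sub act B)"
    by (simp add: hcycles_def)
  have "(average \<circ> c) - c = average_htpy (bd act c) + bd act (average_htpy c)"
    using bd_average_htpy[OF chainsD(1)[OF cT(1)]] by (simp add: add.commute)
  moreover have "average_htpy (bd act c) \<in> chains n ?T"
    by (rule average_htpy_bd_chains[OF add_subgroup_coinv_sub divide_length_coinv_sub cT])
  moreover have "average_htpy c \<in> chains (Suc n) UNIV"
    by (rule average_htpy_chains[OF add_subgroup_UNIV _ cT(1)]) simp
  ultimately have "(average \<circ> c, c) \<in> hrel act n ?T"
    using avg c hcycles_mono[of "coinv_sub act B" ?T n] coinv_sub_mono[of B UNIV act]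
    unfolding hrel_def by blast
  with avg show ?thesis by blast
qed

theorem bij_betw_hmap:
  "bij_betw (hmap act n (coinv_sub act UNIV))
     (group_homology act n (coinv_sub act B)) (group_homology act n (coinv_sub act UNIV))"
proof -
  have "coinv_sub act B \<subseteq> coinv_sub act UNIV" by (rule coinv_sub_mono) simp
  from bij_betw_quotient_map[OF equiv_hrel[OF add_subgroup_coinv_sub] equiv_hrel[OF add_subgroup_coinv_sub]
      hcycles_mono[OF this] hrel_mono[OF this] hrel_reflect hcycles_lift]
  show ?thesis
    by (simp add: group_homology_def hmap_def[abs_def])
qed

definition average_coch_htpy :: "nat \<Rightarrow> ('a list \<Rightarrow> 'm) \<Rightarrow> 'a list \<Rightarrow> 'm" where
  "average_coch_htpy k f = divide_length \<circ> (\<Sum>w\<leftarrow>W. coch_htpy w (Suc k) f)"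

lemma cbd_average_coch_htpy:
  assumes f: "f \<in> cocycles act (Suc k) N"
  shows "(average \<circ> f) - f = cbd act k (average_coch_htpy k f)"
proof -
  have f': "f \<in> cochains (Suc k) N" "cbd act (Suc k) f = 0"
    using f by (auto simp: cocycles_def)
  have "(act w \<circ> f) - f = cbd act k (coch_htpy w (Suc k) f)" for w
  proof
    fix y
    show "((act w \<circ> f) - f) y = cbd act k (coch_htpy w (Suc k) f) y"
    proof (cases "length y = Suc k")
      case True
      then show ?thesis
        using cbd_coch_htpy[OF True, of w f] f'(2) by (simp add: coch_htpy_def)
    next
      case False
      then show ?thesis using f'(1) by (simp add: cochains_def cbd_def)
    qed
  qed
  then have "(average \<circ> f) - f = divide_length \<circ> cbd act k (\<Sum>w\<leftarrow>W. coch_htpy w (Suc k) f)"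
    by (simp add: average_minus_id additive.sum_list_map[OF additive_cbd])
  also have "\<dots> = cbd act k (average_coch_htpy k f)"
    unfolding average_coch_htpy_def by (rule cbd_comp[OF additive_divide_length divide_length_act])
  finally show ?thesis .
qed

lemma average_cochains: "f \<in> cochains n (invariants act B) \<Longrightarrow> average \<circ> f \<in> cochains n (invariants act UNIV)"
  by (rule cochains_comp[where \<phi>=average, OF average_zero average_invariants])

lemma crel_reflect:
  assumes f1: "f1 \<in> cocycles act n (invariants act UNIV)" and f2: "f2 \<in> cocycles act n (invariants act UNIV)"
    and rel: "(f1, f2) \<in> crel act n (invariants act B)"
  shows "(f1, f2) \<in> crel act n (invariants act UNIV)"
proof -
  have "f1 - f2 \<in> coboundaries act n (invariants act UNIV)"
  proof (cases n)
    case 0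
    then show ?thesis using rel by (simp add: crel_def coboundaries_def)
  next
    case (Suc k)
    then obtain g where g: "g \<in> cochains k (invariants act B)" "f1 - f2 = cbd act k g"
      using rel by (auto simp: crel_def coboundaries_Suc)
    have "f1 - f2 \<in> cochains n (invariants act UNIV)"
      using f1 f2 by (intro cochains_diff[OF add_subgroup_invariants]) (simp_all add: cocycles_def)
    then have "average ((f1 - f2) y) = (f1 - f2) y" for y
      by (cases "length y = n") (simp_all add: cochains_def average_fixes_invariants)
    then have "average \<circ> (f1 - f2) = f1 - f2"
      by (simp add: fun_eq_iff)
    then have "f1 - f2 = cbd act k (average \<circ> g)"
      using cbd_comp[OF additive_average average_act, of k g] g(2) by simp
    with average_cochains[OF g(1)] Suc show ?thesis
      by (simp add: coboundaries_Suc)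
  qed
  with f1 f2 show ?thesis by (simp add: crel_def)
qed

lemma cocycle_0_invariant:
  assumes f: "f \<in> cocycles act 0 N"
  shows "f [] \<in> invariants act UNIV"
proof -
  have "cbd act 0 f [g] = 0" for g
    using f by (simp add: cocycles_def)
  then have "act g (f []) = f []" for g
    by (simp add: cbd_def sgn_pow_def)
  then show ?thesis by (simp add: invariants_def)
qed

lemma cocycles_lift:
  assumes f: "f \<in> cocycles act n (invariants act B)"
  shows "\<exists>f'\<in>cocycles act n (invariants act UNIV). (f', f) \<in> crel act n (invariants act B)"
proof -
  let ?N = "invariants act B"
  have fc: "f \<in> cochains n ?N" and cf: "cbd act n f = 0"
    using f by (auto simp: cocycles_def)
  have avg: "average \<circ> f \<in> cocycles act n (invariants act UNIV)"
    using average_cochains[OF fc] cbd_comp[OF additive_average average_act, of n f] cf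
    by (simp add: cocycles_def zero_fun_def comp_def)
  have "(average \<circ> f) - f \<in> coboundaries act n ?N"
  proof (cases n)
    case 0
    have "average (f y) = f y" for y
      using fc 0 average_fixes_invariants[OF cocycle_0_invariant[OF f[unfolded 0]]]
      by (cases "y = []") (simp_all add: cochains_def)
    then have "average \<circ> f = f"
      by (simp add: fun_eq_iff)
    then show ?thesis using 0 by (simp add: coboundaries_def)
  next
    case (Suc k)
    have "average_coch_htpy k f \<in> cochains k ?N"
      unfolding average_coch_htpy_def
      by (rule cochains_comp[where \<phi>=divide_length, OF additive.zero[OF additive_divide_length]
            invariants_map[OF divide_length_act]])
         (use fc Suc in \<open>auto intro!: cochains_sum_list add_subgroup_invariants coch_htpy_cochains\<close>)
    then show ?thesis
      using cbd_average_coch_htpy f Suc by (simp add: coboundaries_Suc)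
  qed
  then have "(average \<circ> f, f) \<in> crel act n ?N"
    using avg f cocycles_mono[OF invariants_antimono[of B UNIV]] by (auto simp: crel_def)
  with avg show ?thesis by blast
qed

theorem bij_betw_cmap:
  "bij_betw (cmap act n (invariants act B))
     (group_cohomology act n (invariants act UNIV)) (group_cohomology act n (invariants act B))"
proof -
  have "invariants act UNIV \<subseteq> invariants act B" by (rule invariants_antimono) simp
  from bij_betw_quotient_map[OF equiv_crel[OF add_subgroup_invariants] equiv_crel[OF add_subgroup_invariants]
      cocycles_mono[OF this] crel_mono[OF this] crel_reflect cocycles_lift]
  show ?thesis
    by (simp add: group_cohomology_def cmap_def[abs_def])
qed

end

section \<open>Averaging over a finite quotient of exponent \<open>l\<close>\<close>

fun coset_words :: "nat \<Rightarrow> 'a::ab_group_add list \<Rightarrow> 'a list" where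
  "coset_words l [] = [0]"
| "coset_words l (a # as) = concat (map (\<lambda>i. map (\<lambda>w. nat_mult i a + w) (coset_words l as)) [0..<l])"

lemma length_coset_words: "length (coset_words l as) = l ^ length as"
  by (induction as) (simp_all add: length_concat comp_def interv_sum_list_conv_sum_set_nat lessThan_atLeast0)

locale finite_torsion_quotient = group_module act for act :: "'a::ab_group_add \<Rightarrow> 'm::ab_group_add \<Rightarrow> 'm" +
  fixes B :: "'a set" and l :: nat and gs :: "'a list"
  assumes nat_mult_in_B: "nat_mult l a \<in> B"
    and bij_nat_mult: "bij (nat_mult l :: 'm \<Rightarrow> 'm)"
    and representatives: "\<exists>r\<in>set gs. g - r \<in> B"
begin

lemma sum_translates_coset_words_Cons:
  "sum_translates (coset_words l (a # as)) x = (\<Sum>i<l. act (nat_mult i a) (sum_translates (coset_words l as) x))"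
  by (simp add: sum_translates_concat comp_def sum_translates_shift interv_sum_list_conv_sum_set_nat lessThan_atLeast0)

lemma act_sum_multiples:
  "act a (\<Sum>i<l. act (nat_mult i a) y) = (\<Sum>i<l. act (nat_mult i a) y) - y + act (nat_mult l a) y"
proof -
  have "act a (\<Sum>i<l. act (nat_mult i a) y) = (\<Sum>i<l. act (nat_mult (Suc i) a) y)"
    by (simp add: act_sum act_plus[symmetric] nat_mult_Suc)
  also have "\<dots> = (\<Sum>i<Suc l. act (nat_mult i a) y) - y"
    by (subst sum.lessThan_Suc_shift) (simp add: act_0)
  finally show ?thesis by simp
qed

lemma sum_translates_invariants_B:
  "x \<in> invariants act B \<Longrightarrow> sum_translates ws x \<in> invariants act B"
  by (simp add: invariants_def sum_translates_act[symmetric])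

lemma act_sum_translates_coset_words:
  assumes x: "x \<in> invariants act B" and a: "a \<in> set as"
  shows "act a (sum_translates (coset_words l as) x) = sum_translates (coset_words l as) x"
  using a
proof (induction as)
  case (Cons b as)
  let ?y = "sum_translates (coset_words l as) x"
  show ?case
  proof (cases "a = b")
    case True
    have "act (nat_mult l a) ?y = ?y"
      using sum_translates_invariants_B[OF x] nat_mult_in_B by (simp add: invariants_def)
    then show ?thesis
      unfolding sum_translates_coset_words_Cons True by (simp add: act_sum_multiples)
  next
    case False
    then have "act a ?y = ?y" using Cons by simp
    then have "act a (act (nat_mult i b) ?y) = act (nat_mult i b) ?y" for i
      by (metis act_commute)
    then show ?thesis
      unfolding sum_translates_coset_words_Cons by (simp add: act_sum)
  qed
qed simp

lemma act_minus_id_coinv_sub: "b \<in> B \<Longrightarrow> act b x - x \<in> coinv_sub act B"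
  using add_subgroup_uminus[OF add_subgroup_coinv_sub coinv_sub_gen[of b B x act]] by simp

lemma act_sum_translates_coset_words_coinv_sub:
  assumes a: "a \<in> set as"
  shows "act a (sum_translates (coset_words l as) x) - sum_translates (coset_words l as) x
    \<in> coinv_sub act B"
  using a
proof (induction as)
  case (Cons b as)
  let ?y = "sum_translates (coset_words l as) x"
  show ?case
  proof (cases "a = b")
    case True
    have "act (nat_mult l a) ?y - ?y \<in> coinv_sub act B"
      by (rule act_minus_id_coinv_sub[OF nat_mult_in_B])
    then show ?thesis
      unfolding sum_translates_coset_words_Cons True by (simp add: act_sum_multiples algebra_simps)
  next
    case False
    then have "act a ?y - ?y \<in> coinv_sub act B" using Cons by simp
    then have "(\<Sum>i<l. act (nat_mult i b) (act a ?y - ?y)) \<in> coinv_sub act B"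
      by (intro add_subgroup_sum[OF add_subgroup_coinv_sub] act_coinv_sub)
    then show ?thesis
      unfolding sum_translates_coset_words_Cons
      by (simp add: act_sum act_commute act_diff sum_subtractf)
  qed
qed simp

lemma sum_translates_coset_words_invariants:
  assumes x: "x \<in> invariants act B"
  shows "sum_translates (coset_words l gs) x \<in> invariants act UNIV"
proof -
  let ?z = "sum_translates (coset_words l gs) x"
  have "act g ?z = ?z" for g
  proof -
    obtain r where r: "r \<in> set gs" "g - r \<in> B"
      using representatives by blast
    have "act g ?z = act r (act (g - r) ?z)"
      by (simp add: act_plus[symmetric])
    also have "act (g - r) ?z = ?z"
      using sum_translates_invariants_B[OF x] r(2) by (simp add: invariants_def)
    finally show ?thesis
      using act_sum_translates_coset_words[OF x r(1)] by simp
  qed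
  then show ?thesis by (simp add: invariants_def)
qed

lemma sum_translates_coset_words_coinv_sub:
  "act g (sum_translates (coset_words l gs) x) - sum_translates (coset_words l gs) x \<in> coinv_sub act B"
proof -
  let ?z = "sum_translates (coset_words l gs) x"
  obtain r where r: "r \<in> set gs" "g - r \<in> B"
    using representatives by blast
  have "act g ?z - ?z = act r (act (g - r) ?z - ?z) + (act r ?z - ?z)"
    by (simp add: act_diff act_plus[symmetric])
  also have "\<dots> \<in> coinv_sub act B"
    using act_coinv_sub[OF act_minus_id_coinv_sub[OF r(2)]]
      act_sum_translates_coset_words_coinv_sub[OF r(1)]
    by (rule add_subgroup_add[OF add_subgroup_coinv_sub])
  finally show ?thesis .
qed

lemma averaging: "averaging act (coset_words l gs) B"
  by unfold_locales
     (simp_all add: length_coset_words bij_nat_mult_power[OF bij_nat_mult]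
       sum_translates_coset_words_invariants sum_translates_coset_words_coinv_sub)

end

lemma finite_quotient_representatives:
  fixes B :: "'a::ab_group_add set"
  assumes "0 \<in> B" and "finite {(+) a ` B | a. True}"
  obtains gs where "\<And>g. \<exists>r\<in>set gs. g - r \<in> B"
proof -
  obtain cs where cs: "set cs = {(+) a ` B | a. True}"
    using finite_list[OF assms(2)] by blast
  define gs where "gs = map (\<lambda>C. SOME r. C = (+) r ` B) cs"
  have "\<exists>r\<in>set gs. g - r \<in> B" for g
  proof -
    define r where "r = (SOME r. (+) g ` B = (+) r ` B)"
    have r: "(+) g ` B = (+) r ` B"
      unfolding r_def by (rule someI[of _ g]) simp
    have "g \<in> (+) r ` B"
      using assms(1) r[symmetric] by (metis add.right_neutral image_eqI)
    then have "g - r \<in> B" by auto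
    moreover have "r \<in> set gs"
      using cs unfolding gs_def r_def by auto
    ultimately show ?thesis by blast
  qed
  then show thesis by (rule that)
qed

theorem theorem1p5:
  fixes act :: "'a::ab_group_add \<Rightarrow> 'm::ab_group_add \<Rightarrow> 'm"
    and B :: "'a set" and l :: nat and n :: nat
  assumes l_pos: "0 < l"
    and B_zero: "0 \<in> B"
    and B_diff: "\<forall>x\<in>B. \<forall>y\<in>B. x - y \<in> B"
    and quot_finite: "finite {(+) a ` B | a. True}"
    and quot_torsion: "\<forall>a. (\<Sum>_<l. a) \<in> B"
    and act_add: "\<forall>g x y. act g (x + y) = act g x + act g y"
    and act_zero: "\<forall>x. act 0 x = x"
    and act_comp: "\<forall>g h x. act (g + h) x = act g (act h x)"
    and l_invertible: "bij (\<lambda>m::'m. \<Sum>_<l. m)"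
  shows "bij_betw (hmap act n (coinv_sub act UNIV))
            (group_homology act n (coinv_sub act B))
            (group_homology act n (coinv_sub act UNIV))
       \<and> bij_betw (cmap act n (invariants act B))
            (group_cohomology act n (invariants act UNIV))
            (group_cohomology act n (invariants act B))"
proof -
  obtain gs where gs: "\<And>g. \<exists>r\<in>set gs. g - r \<in> B"
    using finite_quotient_representatives[OF B_zero quot_finite] by blast
  have nat_mult_l: "nat_mult l = (\<lambda>m::'m. \<Sum>_<l. m)"
    by (simp add: fun_eq_iff nat_mult_def)
  interpret finite_torsion_quotient act B l gs
    using act_add act_zero act_comp quot_torsion l_invertible gs
    by unfold_locales (simp_all add: nat_mult_l nat_mult_def)
  interpret averaging act "coset_words l gs" B
    by (rule averaging)
  show ?thesis
    using bij_betw_hmap bij_betw_cmap by blast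
qed

end
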